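(* Let $m$ be a positive integer and let $h_{r,d},h_{r,u}$ be independent random variables such that each of $|h_{r,d}|^2,|h_{r,u}|^2$ has density $f(x)=\frac{m^m}{\Gamma(m)}x^{m-1}e^{-mx}$, $x>0$; put $Z=|h_{r,d}|^2|h_{r,u}|^2$. Let $\delta,T,\Xi_{r,1},d_t,\alpha_r$ be positive constants and define $R_{est}:=\frac{\delta}{2T}\,\mathbb{E}\big[\log_2(1+\Xi_{r,1}d_t^{-\alpha_r}Z)\big]$. Then $$R_{est}=\sum_{k=0}^{m-1}\frac{\delta}{2T\ln 2}\int_0^\infty\exp\!\Big(\frac{m d_t^{\alpha_r}}{\Xi_{r,1}x}\Big)E_{k+1}\!\Big(\frac{m d_t^{\alpha_r}}{\Xi_{r,1}x}\Big)f(x)\,dx,$$ where $E_n(y)=\int_1^\infty e^{-yt}t^{-n}\,dt$ is the generalized exponential integral.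
   Context: $R_{est}$ is the ergodic radar estimation information rate: $\delta$ is the radar duty factor, $T$ the pulse duration, $d_t$ the BS–target distance, $\alpha_r$ the radar path loss exponent, $|h_{r,d}|^2,|h_{r,u}|^2$ the unit-mean Nakagami-$m$ power gains of the downlink and reflected links, and $\Xi_{r,1}d_t^{-\alpha_r}Z$ plays the role of $2T\beta_{semi}B\gamma_r^{echo}$ in the rate bound $\frac{\delta}{2T}\log_2(1+2T\beta_{semi}B\gamma_r^{echo})$. *)

theory Defs
  imports "HOL-Probability.Probability"
begin

definition nak_pdf :: "nat \<Rightarrow> real \<Rightarrow> real" where
  "nak_pdf m x = (if x > 0 then (real m) ^ m / Gamma (real m) * x ^ (m - 1) * exp (- real m * x) else 0)"

definition gen_expint :: "nat \<Rightarrow> real \<Rightarrow> real" where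
  "gen_expint n y = (LINT t:{1..}|lborel. exp (- y * t) * t powr (- real n))"

end

theory Submission
  imports Defs
begin

(* Condition on |h_rd|^2 = x, put c = Xi dt^(-alpha) x and b = m / c.  Frullani's representation
   ln (1 + z / b) = int_0^oo exp (-b s) (1 - exp (-z s)) / s ds with z = m |h_ru|^2, Tonelli and the
   Laplace transform E [exp (-s m Y)] = (1 + s)^(-m) of the Gamma (m, 1/m) law give
     E [ln (1 + c Y)] = int_0^oo exp (-b s) (1 - (1 + s)^(-m)) / s ds
                      = sum_{k<m} int_0^oo exp (-b s) (1 + s)^(-(k+1)) ds = sum_{k<m} e^b E_(k+1) (b).
   Integrating over x against the Nakagami density gives the formula; each summand is finite since
   ln (1 + t) <= t and E [Y] = 1, so the sum may be taken out of the expectation. *)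

lemma borel_measurable_nak_pdf [measurable]: "nak_pdf m \<in> borel_measurable borel"
  unfolding nak_pdf_def[abs_def] by measurable

lemma borel_measurable_gen_expint [measurable]: "gen_expint n \<in> borel_measurable borel"
  unfolding gen_expint_def[abs_def] set_lebesgue_integral_def by measurable

lemma nak_pdf_nonneg: "0 \<le> nak_pdf m x"
  by (cases "m = 0") (auto simp: nak_pdf_def intro!: divide_nonneg_pos)

lemma nak_pdf_eq_0: "x \<le> 0 \<Longrightarrow> nak_pdf m x = 0"
  by (simp add: nak_pdf_def)

lemma gen_expint_nonneg: "0 \<le> gen_expint n y"
  unfolding gen_expint_def set_lebesgue_integral_def
  by (rule Bochner_Integration.integral_nonneg) (simp add: indicator_def)

lemma nak_pdf_eq_erlang_density:
  assumes "m > 0" "x > 0"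
  shows "nak_pdf m x = erlang_density (m - 1) (real m) x"
proof -
  have "Gamma (real m) = fact (m - 1)"
    using assms Gamma_fact[of "m - 1"] by simp
  moreover have "Suc (m - 1) = m" using assms by simp
  ultimately show ?thesis
    using assms by (simp add: nak_pdf_def erlang_density_def)
qed

lemma nn_integral_nak_pdf_eq_erlang:
  assumes "m > 0"
  shows "(\<integral>\<^sup>+x. ennreal (nak_pdf m x * g x) \<partial>lborel)
       = (\<integral>\<^sup>+x. ennreal (erlang_density (m - 1) (real m) x * g x) \<partial>lborel)"
  by (rule nn_integral_cong_AE, use AE_lborel_singleton[of 0] in eventually_elim)
     (auto simp: nak_pdf_eq_erlang_density[OF assms] nak_pdf_eq_0 erlang_density_def)

lemma nn_integral_nak_pdf_exp:
  assumes "m > 0" "t \<ge> 0"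
  shows "(\<integral>\<^sup>+x. ennreal (nak_pdf m x * exp (- t * x)) \<partial>lborel) = ennreal ((m / (m + t)) ^ m)"
proof -
  define l where "l = real m + t"
  have l: "l > 0" using assms by (simp add: l_def)
  have tilt: "erlang_density (m - 1) m x * exp (- t * x) = (m / l) ^ m * (erlang_density (m - 1) l x * x ^ 0)" for x
  proof -
    have "Suc (m - 1) = m" using assms by simp
    moreover have "exp (- real m * x) * exp (- t * x) = exp (- l * x)"
      by (simp add: l_def mult_exp_exp algebra_simps)
    ultimately show ?thesis
      using l by (simp add: erlang_density_def field_simps)
  qed
  have "(\<integral>\<^sup>+x. ennreal (nak_pdf m x * exp (- t * x)) \<partial>lborel)
      = (\<integral>\<^sup>+x. ennreal ((m / l) ^ m) * ennreal (erlang_density (m - 1) l x * x ^ 0) \<partial>lborel)"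
    unfolding nn_integral_nak_pdf_eq_erlang[OF assms(1)] tilt
    by (intro nn_integral_cong) (simp add: ennreal_mult l less_imp_le)
  also have "\<dots> = ennreal ((m / l) ^ m)"
    using l nn_integral_erlang_ith_moment[OF l, of "m - 1" 0] by (simp add: nn_integral_cmult)
  finally show ?thesis by (simp add: l_def)
qed

lemma nn_integral_nak_pdf_mean:
  assumes "m > 0"
  shows "(\<integral>\<^sup>+x. ennreal (nak_pdf m x * x) \<partial>lborel) = 1"
proof -
  have "fact (m - 1 + 1) = (real m * fact (m - 1) :: real)"
    using assms by (metis Suc_diff_1 Suc_eq_plus1 fact_Suc)
  then show ?thesis
    using assms nn_integral_erlang_ith_moment[of "real m" "m - 1" 1]
    by (simp add: nn_integral_nak_pdf_eq_erlang[OF assms, of "\<lambda>x. x"])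
qed

lemma nn_integral_exp_Ioi:
  assumes "l > 0"
  shows "(\<integral>\<^sup>+s\<in>{0<..}. ennreal (exp (- l * s)) \<partial>lborel) = ennreal (1 / l)"
proof -
  have "((\<lambda>s. exp (- l * s)) has_integral 1 / l) {0..}"
    using has_integral_exp_minus_to_infinity[OF assms, of 0] by simp
  then have "((\<lambda>s. exp (- l * s)) has_integral 1 / l) {0<..}"
    by (rule has_integral_spike_set_eq[THEN iffD1, rotated 2]) (auto intro: negligible_subset[of "{0}"])
  then show ?thesis
    by (rule nn_integral_has_integral_lebesgue'[rotated]) simp
qed

lemma nn_integral_exp_Icc:
  assumes "s > 0" "z \<ge> 0"
  shows "(\<integral>\<^sup>+u\<in>{0..z}. ennreal (exp (- s * u)) \<partial>lborel) = ennreal ((1 - exp (- s * z)) / s)"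
proof -
  have "((\<lambda>u. exp (- s * u)) has_integral (- exp (- s * z) / s) - (- exp (- s * 0) / s)) {0..z}"
    using assms
    by (intro fundamental_theorem_of_calculus)
       (auto intro!: derivative_eq_intros simp: has_real_derivative_iff_has_vector_derivative[symmetric])
  then show ?thesis
    by (intro nn_integral_has_integral_lebesgue') (simp_all add: diff_divide_distrib)
qed

lemma nn_integral_inverse_Icc:
  assumes "b > 0" "z \<ge> 0"
  shows "(\<integral>\<^sup>+u\<in>{0..z}. ennreal (1 / (b + u)) \<partial>lborel) = ennreal (ln (b + z) - ln b)"
proof -
  have "((\<lambda>u. 1 / (b + u)) has_integral ln (b + z) - ln (b + 0)) {0..z}"
    using assms
    by (intro fundamental_theorem_of_calculus)
       (auto intro!: derivative_eq_intros simp: has_real_derivative_iff_has_vector_derivative[symmetric])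
  then show ?thesis
    using assms by (intro nn_integral_has_integral_lebesgue') simp_all
qed

lemma geometric_sum_inverse_Suc:
  assumes "s > (0::real)"
  shows "(\<Sum>k<m. 1 / (1 + s) ^ (k + 1)) = (1 - 1 / (1 + s) ^ m) / s"
proof -
  define x where "x = 1 / (1 + s)"
  have x: "x \<noteq> 0" "x \<noteq> 1" "1 - x = s * x"
    using assms by (auto simp: x_def field_simps)
  have "(\<Sum>k<m. 1 / (1 + s) ^ (k + 1)) = x * (\<Sum>k<m. x ^ k)"
    by (simp add: x_def sum_distrib_left power_one_over)
  also have "\<dots> = (1 - x ^ m) / s"
    using x assms by (simp add: sum_gp_strict)
  finally show ?thesis by (simp add: x_def power_one_over)
qed

lemma nn_integral_Frullani_ln:
  assumes "b > 0" "z \<ge> 0"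
  shows "(\<integral>\<^sup>+s\<in>{0<..}. ennreal (exp (- b * s) * (1 - exp (- z * s)) / s) \<partial>lborel)
       = ennreal (ln (1 + z / b))"
proof -
  have inner: "ennreal (exp (- b * s) * (1 - exp (- z * s)) / s)
             = (\<integral>\<^sup>+u\<in>{0..z}. ennreal (exp (- (b + u) * s)) \<partial>lborel)" if "s > 0" for s
  proof -
    have "(\<integral>\<^sup>+u\<in>{0..z}. ennreal (exp (- (b + u) * s)) \<partial>lborel)
        = ennreal (exp (- b * s)) * (\<integral>\<^sup>+u\<in>{0..z}. ennreal (exp (- s * u)) \<partial>lborel)"
      by (subst nn_integral_cmult[symmetric])
         (auto intro!: nn_integral_cong simp: ennreal_mult'[symmetric] mult_exp_exp algebra_simps)
    also have "\<dots> = ennreal (exp (- b * s)) * ennreal ((1 - exp (- s * z)) / s)"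
      by (simp only: nn_integral_exp_Icc[OF that assms(2)])
    also have "\<dots> = ennreal (exp (- b * s) * (1 - exp (- z * s)) / s)"
      using that by (simp add: ennreal_mult'[symmetric] mult.commute[of s z])
    finally show ?thesis ..
  qed
  define F where "F s u = ennreal (exp (- (b + u) * s)) * indicator {0..z} u * indicator {0<..} s"
    for s u :: real
  have "(\<integral>\<^sup>+s\<in>{0<..}. ennreal (exp (- b * s) * (1 - exp (- z * s)) / s) \<partial>lborel)
      = (\<integral>\<^sup>+s. \<integral>\<^sup>+u. F s u \<partial>lborel \<partial>lborel)"
  proof (intro nn_integral_cong)
    fix s :: real
    show "ennreal (exp (- b * s) * (1 - exp (- z * s)) / s) * indicator {0<..} s
        = (\<integral>\<^sup>+u. F s u \<partial>lborel)"
      using inner[of s] by (cases "s > 0") (simp_all add: F_def nn_integral_multc)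
  qed
  also have "\<dots> = (\<integral>\<^sup>+u. \<integral>\<^sup>+s. F s u \<partial>lborel \<partial>lborel)"
    unfolding F_def by (rule lborel_pair.Fubini') measurable
  also have "\<dots> = (\<integral>\<^sup>+u\<in>{0..z}. ennreal (1 / (b + u)) \<partial>lborel)"
  proof (intro nn_integral_cong)
    fix u :: real
    show "(\<integral>\<^sup>+s. F s u \<partial>lborel) = ennreal (1 / (b + u)) * indicator {0..z} u"
      using nn_integral_exp_Ioi[of "b + u"] assms by (cases "u \<in> {0..z}") (simp_all add: F_def)
  qed
  also have "\<dots> = ennreal (ln ((b + z) / b))"
    using assms by (simp add: nn_integral_inverse_Icc ln_div)
  finally show ?thesis
    using assms by (simp add: add_divide_distrib)
qed

lemma nn_integral_exp_div_power_eq_gen_expint: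
  assumes "b > 0"
  shows "(\<integral>\<^sup>+s\<in>{0<..}. ennreal (exp (- b * s) / (1 + s) ^ n) \<partial>lborel)
       = ennreal (exp b * gen_expint n b)"
proof -
  define Q where "Q = (\<integral>\<^sup>+s\<in>{0<..}. ennreal (exp (- b * s) / (1 + s) ^ n) \<partial>lborel)"
  have "Q \<le> (\<integral>\<^sup>+s\<in>{0<..}. ennreal (exp (- b * s)) \<partial>lborel)"
    unfolding Q_def
    by (intro nn_integral_mono)
       (auto simp: divide_le_eq intro!: mult_left_mono[of 1, simplified] one_le_power split: split_indicator)
  also have "\<dots> = ennreal (1 / b)"
    using assms by (rule nn_integral_exp_Ioi)
  finally have Q_finite: "Q < \<infinity>"
    using order.strict_trans1 by fastforce
  have "gen_expint n b = enn2real (\<integral>\<^sup>+t\<in>{1..}. ennreal (exp (- b * t) * t powr (- real n)) \<partial>lborel)"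
    unfolding gen_expint_def set_lebesgue_integral_def
    by (subst integral_eq_nn_integral)
       (auto intro!: arg_cong[where f = enn2real] nn_integral_cong split: split_indicator)
  also have "(\<integral>\<^sup>+t\<in>{1..}. ennreal (exp (- b * t) * t powr (- real n)) \<partial>lborel)
      = (\<integral>\<^sup>+s. ennreal (exp (- b * (1 + s)) * (1 + s) powr (- real n)) * indicator {1..} (1 + s)
           \<partial>lborel)"
    by (subst nn_integral_real_affine[where c = 1 and t = 1]) simp_all
  also have "\<dots> = ennreal (exp (- b)) * Q"
    unfolding Q_def
    by (subst nn_integral_cmult[symmetric], simp,
        rule nn_integral_cong_AE, use AE_lborel_singleton[of 0] in eventually_elim)
       (auto simp: ennreal_mult'[symmetric] mult_exp_exp powr_minus powr_realpow divide_inverse algebra_simps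
             split: split_indicator)
  finally have "exp b * gen_expint n b = enn2real Q"
    by (simp add: enn2real_mult mult_exp_exp)
  then show ?thesis
    using Q_finite by (simp add: Q_def)
qed

lemma nn_integral_nak_pdf_one_minus_exp:
  assumes "m > 0" "t \<ge> 0"
  shows "(\<integral>\<^sup>+x. ennreal (nak_pdf m x * (1 - exp (- t * x))) \<partial>lborel) = ennreal (1 - (m / (m + t)) ^ m)"
proof -
  define I where "I = (\<integral>\<^sup>+x. ennreal (nak_pdf m x * (1 - exp (- t * x))) \<partial>lborel)"
  have "I + ennreal ((m / (m + t)) ^ m)
      = (\<integral>\<^sup>+x. ennreal (nak_pdf m x * (1 - exp (- t * x))) + ennreal (nak_pdf m x * exp (- t * x)) \<partial>lborel)"
    unfolding I_def nn_integral_nak_pdf_exp[OF assms, symmetric]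
    by (rule nn_integral_add[symmetric]) measurable
  also have "\<dots> = (\<integral>\<^sup>+x. ennreal (nak_pdf m x * exp (- 0 * x)) \<partial>lborel)"
  proof (intro nn_integral_cong)
    fix x :: real
    have "nak_pdf m x * exp (- t * x) \<le> nak_pdf m x"
      using assms by (cases "x > 0") (auto simp: nak_pdf_eq_0 nak_pdf_nonneg intro!: mult_left_le)
    then show "ennreal (nak_pdf m x * (1 - exp (- t * x))) + ennreal (nak_pdf m x * exp (- t * x))
        = ennreal (nak_pdf m x * exp (- 0 * x))"
      by (simp add: ennreal_plus[symmetric] nak_pdf_nonneg right_diff_distrib)
  qed
  also have "\<dots> = 1"
    using assms by (subst nn_integral_nak_pdf_exp) simp_all
  finally have "I = 1 - ennreal ((m / (m + t)) ^ m)"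
    by (metis ennreal_add_diff_cancel_right ennreal_neq_top)
  then show ?thesis
    using assms by (simp add: I_def ennreal_minus[symmetric])
qed

lemma nn_integral_nak_pdf_ln:
  assumes "m > 0" "c > (0::real)"
  shows "(\<integral>\<^sup>+y. ennreal (nak_pdf m y * ln (1 + c * y)) \<partial>lborel)
       = ennreal (\<Sum>k<m. exp (m / c) * gen_expint (k + 1) (m / c))"
proof -
  define b where "b = m / c"
  have b: "b > 0"
    using assms by (simp add: b_def)
  define F where "F y s = ennreal (nak_pdf m y) * ennreal (exp (- b * s) * (1 - exp (- (m * y) * s)) / s)
                          * indicator {0<..} s" for y s :: real
  have "(\<integral>\<^sup>+y. ennreal (nak_pdf m y * ln (1 + c * y)) \<partial>lborel)
      = (\<integral>\<^sup>+y. \<integral>\<^sup>+s. F y s \<partial>lborel \<partial>lborel)"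
  proof (intro nn_integral_cong)
    fix y :: real
    show "ennreal (nak_pdf m y * ln (1 + c * y)) = (\<integral>\<^sup>+s. F y s \<partial>lborel)"
    proof (cases "y > 0")
      case True
      have "c * y = m * y / b"
        using assms by (simp add: b_def)
      then show ?thesis
        using True b nn_integral_Frullani_ln[of b "m * y"]
        by (simp add: F_def mult.assoc nn_integral_cmult ennreal_mult' nak_pdf_nonneg)
    qed (simp add: F_def nak_pdf_eq_0)
  qed
  also have "\<dots> = (\<integral>\<^sup>+s. \<integral>\<^sup>+y. F y s \<partial>lborel \<partial>lborel)"
    unfolding F_def by (rule lborel_pair.Fubini') measurable
  also have "\<dots> = (\<integral>\<^sup>+s\<in>{0<..}. (\<Sum>k<m. ennreal (exp (- b * s) / (1 + s) ^ (k + 1))) \<partial>lborel)"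
  proof (intro nn_integral_cong)
    fix s :: real
    show "(\<integral>\<^sup>+y. F y s \<partial>lborel) = (\<Sum>k<m. ennreal (exp (- b * s) / (1 + s) ^ (k + 1))) * indicator {0<..} s"
    proof (cases "s > 0")
      case True
      have "(\<integral>\<^sup>+y. F y s \<partial>lborel)
          = ennreal (exp (- b * s) / s) * (\<integral>\<^sup>+y. ennreal (nak_pdf m y * (1 - exp (- (s * m) * y))) \<partial>lborel)"
        using True
        by (subst nn_integral_cmult[symmetric])
           (auto simp: F_def ennreal_mult'[symmetric] nak_pdf_nonneg ac_simps intro!: nn_integral_cong)
      also have "\<dots> = ennreal (exp (- b * s) * ((1 - 1 / (1 + s) ^ m) / s))"
      proof -
        have "real m + s * real m = real m * (1 + s)"
          by (simp add: algebra_simps)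
        then have "real m / (real m + s * real m) = 1 / (1 + s)"
          using assms by simp
        then show ?thesis
          using True assms
          by (subst nn_integral_nak_pdf_one_minus_exp) (simp_all add: ennreal_mult'[symmetric] power_one_over)
      qed
      also have "\<dots> = ennreal (exp (- b * s) * (\<Sum>k<m. 1 / (1 + s) ^ (k + 1)))"
        unfolding geometric_sum_inverse_Suc[OF True] ..
      also have "\<dots> = (\<Sum>k<m. ennreal (exp (- b * s) / (1 + s) ^ (k + 1)))"
        using True by (simp add: sum_distrib_left)
      finally show ?thesis
        using True by simp
    qed (simp add: F_def)
  qed
  also have "\<dots> = (\<Sum>k<m. \<integral>\<^sup>+s\<in>{0<..}. ennreal (exp (- b * s) / (1 + s) ^ (k + 1)) \<partial>lborel)"
    unfolding sum_distrib_right by (rule nn_integral_sum) measurable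
  also have "\<dots> = ennreal (\<Sum>k<m. exp b * gen_expint (k + 1) b)"
    using b by (simp only: nn_integral_exp_div_power_eq_gen_expint) (simp add: gen_expint_nonneg)
  finally show ?thesis
    by (simp add: b_def)
qed

lemma nn_integral_nak_pdf_ln_le:
  assumes "m > 0" "c \<ge> (0::real)"
  shows "(\<integral>\<^sup>+y. ennreal (nak_pdf m y * ln (1 + c * y)) \<partial>lborel) \<le> ennreal c"
proof -
  have "(\<integral>\<^sup>+y. ennreal (nak_pdf m y * ln (1 + c * y)) \<partial>lborel)
      \<le> (\<integral>\<^sup>+y. ennreal c * ennreal (nak_pdf m y * y) \<partial>lborel)"
  proof (intro nn_integral_mono)
    fix y :: real
    have "nak_pdf m y * ln (1 + c * y) \<le> nak_pdf m y * (c * y)"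
      using assms
      by (cases "y > 0") (auto simp: nak_pdf_eq_0 nak_pdf_nonneg intro!: mult_left_mono ln_add_one_self_le_self)
    then show "ennreal (nak_pdf m y * ln (1 + c * y)) \<le> ennreal c * ennreal (nak_pdf m y * y)"
      using assms by (simp add: ennreal_mult'[symmetric] ennreal_leI ac_simps)
  qed
  also have "\<dots> = ennreal c"
    using assms by (simp add: nn_integral_cmult nn_integral_nak_pdf_mean)
  finally show ?thesis .
qed

lemma (in prob_space) nn_integral_indep_distributed:
  assumes S: "sigma_finite_measure S" and T: "sigma_finite_measure T"
    and X: "distributed M S X Px" and Y: "distributed M T Y Py"
    and indep: "indep_var S X T Y"
    and h: "case_prod h \<in> borel_measurable (S \<Otimes>\<^sub>M T)"
  shows "(\<integral>\<^sup>+\<omega>. h (X \<omega>) (Y \<omega>) \<partial>M) = (\<integral>\<^sup>+x. \<integral>\<^sup>+y. Px x * Py y * h x y \<partial>T \<partial>S)"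
proof -
  have "(\<integral>\<^sup>+\<omega>. h (X \<omega>) (Y \<omega>) \<partial>M) = (\<integral>\<^sup>+p. (\<lambda>(x, y). Px x * Py y) p * case_prod h p \<partial>(S \<Otimes>\<^sub>M T))"
    using distributed_nn_integral[OF distributed_joint_indep[OF S T X Y indep] h] by simp
  also have "\<dots> = (\<integral>\<^sup>+x. \<integral>\<^sup>+y. Px x * Py y * h x y \<partial>T \<partial>S)"
    using distributed_borel_measurable[OF X] distributed_borel_measurable[OF Y] h
    by (subst sigma_finite_measure.nn_integral_fst[OF T, symmetric]) (auto simp: split_beta')
  finally show ?thesis .
qed

lemma nn_integral_nak_pdf_pair_log2:
  assumes "a \<ge> 0"
  shows "(\<integral>\<^sup>+y. ennreal (nak_pdf m x) * ennreal (nak_pdf m y) * ennreal (log 2 (1 + a * (x * y))) \<partial>lborel)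
       = ennreal (nak_pdf m x / ln 2) * (\<integral>\<^sup>+y. ennreal (nak_pdf m y * ln (1 + a * x * y)) \<partial>lborel)"
proof (cases "x > 0")
  case True
  then show ?thesis
    using assms
    by (subst nn_integral_cmult[symmetric])
       (auto intro!: nn_integral_cong simp: ennreal_mult'[symmetric] nak_pdf_nonneg log_def ac_simps
             dest: nak_pdf_eq_0[of _ m])
qed (simp add: nak_pdf_eq_0)

lemma nn_integral_nak_pdf_pair_log2_eq_gen_expint:
  assumes "m > 0" "a > 0"
  shows "(\<integral>\<^sup>+y. ennreal (nak_pdf m x) * ennreal (nak_pdf m y) * ennreal (log 2 (1 + a * (x * y))) \<partial>lborel)
       = (\<Sum>k<m. ennreal (exp (m / (a * x)) * gen_expint (k + 1) (m / (a * x)) * nak_pdf m x / ln 2))"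
proof (cases "x > 0")
  case True
  have "(\<integral>\<^sup>+y. ennreal (nak_pdf m x) * ennreal (nak_pdf m y) * ennreal (log 2 (1 + a * (x * y))) \<partial>lborel)
      = ennreal (nak_pdf m x / ln 2)
        * ennreal (\<Sum>k<m. exp (m / (a * x)) * gen_expint (k + 1) (m / (a * x)))"
    unfolding nn_integral_nak_pdf_pair_log2[OF less_imp_le[OF assms(2)]]
      nn_integral_nak_pdf_ln[OF assms(1) mult_pos_pos[OF assms(2) True]] ..
  then show ?thesis
    by (simp add: ennreal_mult[symmetric] nak_pdf_nonneg gen_expint_nonneg sum_nonneg sum_distrib_left
        ac_simps)
qed (simp add: nak_pdf_eq_0)

lemma nn_integral_nak_pdf_pair_log2_le:
  assumes "m > 0" "a \<ge> 0"
  shows "(\<integral>\<^sup>+y. ennreal (nak_pdf m x) * ennreal (nak_pdf m y) * ennreal (log 2 (1 + a * (x * y))) \<partial>lborel)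
       \<le> ennreal (a / ln 2) * ennreal (nak_pdf m x * x)"
proof (cases "x > 0")
  case True
  have "(\<integral>\<^sup>+y. ennreal (nak_pdf m x) * ennreal (nak_pdf m y) * ennreal (log 2 (1 + a * (x * y))) \<partial>lborel)
      \<le> ennreal (nak_pdf m x / ln 2) * ennreal (a * x)"
    unfolding nn_integral_nak_pdf_pair_log2[OF assms(2)]
    using True assms by (intro mult_left_mono nn_integral_nak_pdf_ln_le) simp_all
  also have "\<dots> = ennreal (a / ln 2) * ennreal (nak_pdf m x * x)"
    using True assms by (simp add: ennreal_mult[symmetric] nak_pdf_nonneg field_simps)
  finally show ?thesis .
qed (simp add: nak_pdf_eq_0)

lemma nn_integral_nak_pdf_expint_finite:
  assumes "m > 0" "a > 0" "k < m"
  shows "(\<integral>\<^sup>+x. ennreal (exp (m / (a * x)) * gen_expint (k + 1) (m / (a * x)) * nak_pdf m x / ln 2)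
           \<partial>lborel) < \<infinity>"
proof -
  have "(\<integral>\<^sup>+x. ennreal (exp (m / (a * x)) * gen_expint (k + 1) (m / (a * x)) * nak_pdf m x / ln 2)
          \<partial>lborel)
      \<le> (\<integral>\<^sup>+x. \<integral>\<^sup>+y. ennreal (nak_pdf m x) * ennreal (nak_pdf m y) * ennreal (log 2 (1 + a * (x * y)))
          \<partial>lborel \<partial>lborel)"
    unfolding nn_integral_nak_pdf_pair_log2_eq_gen_expint[OF assms(1,2)]
    using assms(3) by (intro nn_integral_mono member_le_sum) auto
  also have "\<dots> \<le> (\<integral>\<^sup>+x. ennreal (a / ln 2) * ennreal (nak_pdf m x * x) \<partial>lborel)"
    using assms by (intro nn_integral_mono nn_integral_nak_pdf_pair_log2_le) simp_all
  also have "\<dots> = ennreal (a / ln 2)"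
    using assms by (simp add: nn_integral_cmult nn_integral_nak_pdf_mean)
  finally show ?thesis
    using order.strict_trans1 by fastforce
qed

lemma (in prob_space) expectation_log2_nakagami_product:
  fixes X Y :: "'a \<Rightarrow> real"
  assumes m: "m > 0" and a: "a > 0"
    and X: "distributed M lborel X (\<lambda>x. ennreal (nak_pdf m x))"
    and Y: "distributed M lborel Y (\<lambda>x. ennreal (nak_pdf m x))"
    and indep: "indep_var lborel X lborel Y"
    and nonneg: "\<And>\<omega>. 0 \<le> X \<omega>" "\<And>\<omega>. 0 \<le> Y \<omega>"
  shows "expectation (\<lambda>\<omega>. log 2 (1 + a * (X \<omega> * Y \<omega>)))
       = (\<Sum>k<m. (LINT x:{0<..}|lborel. exp (m / (a * x)) * gen_expint (k + 1) (m / (a * x)) * nak_pdf m x)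
                  / ln 2)"
proof -
  define G where "G k x = exp (m / (a * x)) * gen_expint (k + 1) (m / (a * x)) * nak_pdf m x / ln 2" for k x
  define I where "I x = (\<integral>\<^sup>+y. ennreal (nak_pdf m x) * ennreal (nak_pdf m y)
                                * ennreal (log 2 (1 + a * (x * y))) \<partial>lborel)" for x
  have G_nonneg: "0 \<le> G k x" for k x
    by (simp add: G_def gen_expint_nonneg nak_pdf_nonneg)
  have G_measurable [measurable]: "G k \<in> borel_measurable borel" for k
    unfolding G_def[abs_def] by measurable
  have "(\<integral>\<^sup>+\<omega>. ennreal (log 2 (1 + a * (X \<omega> * Y \<omega>))) \<partial>M) = (\<integral>\<^sup>+x. I x \<partial>lborel)"
    unfolding I_def
    by (rule nn_integral_indep_distributed[OF lborel.sigma_finite_measure_axioms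
          lborel.sigma_finite_measure_axioms X Y indep]) measurable
  also have "\<dots> = (\<Sum>k<m. \<integral>\<^sup>+x. ennreal (G k x) \<partial>lborel)"
    unfolding I_def nn_integral_nak_pdf_pair_log2_eq_gen_expint[OF m a] G_def
    by (rule nn_integral_sum) measurable
  finally have nn: "(\<integral>\<^sup>+\<omega>. ennreal (log 2 (1 + a * (X \<omega> * Y \<omega>))) \<partial>M)
                  = (\<Sum>k<m. \<integral>\<^sup>+x. ennreal (G k x) \<partial>lborel)" .
  have finite: "(\<integral>\<^sup>+x. ennreal (G k x) \<partial>lborel) < \<infinity>" if "k < m" for k
    unfolding G_def using m a that by (rule nn_integral_nak_pdf_expint_finite)
  have "expectation (\<lambda>\<omega>. log 2 (1 + a * (X \<omega> * Y \<omega>)))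
      = enn2real (\<integral>\<^sup>+\<omega>. ennreal (log 2 (1 + a * (X \<omega> * Y \<omega>))) \<partial>M)"
    using a nonneg distributed_measurable[OF X] distributed_measurable[OF Y]
    by (intro integral_eq_nn_integral AE_I2) (auto simp: add_pos_nonneg)
  also have "\<dots> = (\<Sum>k<m. enn2real (\<integral>\<^sup>+x. ennreal (G k x) \<partial>lborel))"
    unfolding nn using finite by (subst enn2real_sum) auto
  also have "\<dots> = (\<Sum>k<m. LINT x|lborel. G k x)"
    using G_nonneg by (intro sum.cong refl integral_eq_nn_integral[symmetric]) (simp_all add: G_def)
  also have "\<dots> = (\<Sum>k<m. (LINT x:{0<..}|lborel. exp (m / (a * x)) * gen_expint (k + 1) (m / (a * x))
                                                     * nak_pdf m x) / ln 2)"
    unfolding G_def set_lebesgue_integral_def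
    by (intro sum.cong refl) (auto simp: indicator_def nak_pdf_eq_0 intro!: Bochner_Integration.integral_cong)
  finally show ?thesis .
qed

theorem corollary1:
  fixes M :: "'a measure" and m :: nat
    and hd hu :: "'a \<Rightarrow> complex"
    and \<delta> T \<Xi> dt \<alpha> :: real
  assumes "prob_space M"
    and "m > 0"
    and "hd \<in> borel_measurable M" and "hu \<in> borel_measurable M"
    and "prob_space.indep_var M borel hd borel hu"
    and "distributed M lborel (\<lambda>\<omega>. (cmod (hd \<omega>))\<^sup>2) (\<lambda>x. ennreal (nak_pdf m x))"
    and "distributed M lborel (\<lambda>\<omega>. (cmod (hu \<omega>))\<^sup>2) (\<lambda>x. ennreal (nak_pdf m x))"
    and "\<delta> > 0" and "T > 0" and "\<Xi> > 0" and "dt > 0" and "\<alpha> > 0"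
  shows "\<delta> / (2 * T) * prob_space.expectation M
           (\<lambda>\<omega>. log 2 (1 + \<Xi> * dt powr (- \<alpha>) * ((cmod (hd \<omega>))\<^sup>2 * (cmod (hu \<omega>))\<^sup>2)))
       = (\<Sum>k<m. \<delta> / (2 * T * ln 2) *
           (LINT x:{0<..}|lborel.
              exp (real m * dt powr \<alpha> / (\<Xi> * x)) *
              gen_expint (k + 1) (real m * dt powr \<alpha> / (\<Xi> * x)) * nak_pdf m x))"
proof -
  interpret prob_space M by fact
  have square_norm: "(\<lambda>z::complex. (cmod z)\<^sup>2) \<in> measurable borel lborel"
    by simp
  have indep: "indep_var lborel (\<lambda>\<omega>. (cmod (hd \<omega>))\<^sup>2) lborel (\<lambda>\<omega>. (cmod (hu \<omega>))\<^sup>2)"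
    using indep_var_compose[OF assms(5) square_norm square_norm] by (simp add: comp_def)
  define a where "a = \<Xi> * dt powr (- \<alpha>)"
  have a: "a > 0"
    using assms by (simp add: a_def)
  have rate: "real m * dt powr \<alpha> / (\<Xi> * x) = real m / (a * x)" for x
    using assms by (simp add: a_def powr_minus field_simps)
  show ?thesis
    unfolding a_def[symmetric] rate
      expectation_log2_nakagami_product[OF assms(2) a assms(6,7) indep zero_le_power2 zero_le_power2]
    by (simp add: sum_distrib_left)
qed

end
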